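(* Let $p(z)=c_0z^{\deg(p)}+\cdots$ be a non-constant polynomial with leading coefficient $c_0\neq0$, and let $0<\gamma<1$. Then for all $r>0$, $$\int_0^{2\pi}\frac{d\theta}{|p(re^{i\theta})|^{\gamma/\deg(p)}}\le \frac{2\pi}{(1-\gamma)|c_0|^{\gamma/\deg(p)}}\cdot\frac{1}{r^{\gamma}}.$$ *)

theory Defs
  imports "HOL-Analysis.Analysis" "HOL-Computational_Algebra.Polynomial"
begin

end

theory Submission
  imports Defs "HOL-Computational_Algebra.Fundamental_Theorem_Algebra"
begin

(* Factor p = c * prod_i (z - a_i) over its n = deg p complex roots.  By the
   AM-GM inequality, |p(z)|^(-g/n) <= |c|^(-g/n) * (1/n) * sum_i |z - a_i|^(-g), so it suffices
   to bound the integral over the circle |z| = r of a single term |z - a|^(-g) by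
   2 pi / ((1 - g) r^g), uniformly in a.  Writing a = s e^(i phi) with 0 <= phi <= pi, the
   distance from r e^(i theta) to the line through 0 and a is r |sin (theta - phi)|, hence
   |r e^(i theta) - a|^(-g) <= r^(-g) |sin (theta - phi)|^(-g).  Finally, |sin|^(-g) is
   pi-periodic and Jordan's inequality sin t >= 2t/pi gives int_0^(pi/2) |sin t|^(-g) dt <=
   pi / (2 (1 - g)); by symmetry and periodicity every window of length 2 pi contributes at
   most 2 pi / (1 - g). *)

section \<open>Jordan's inequality and integrals of \<open>|sin|\<^sup>-\<^sup>g\<close>\<close>

text \<open>Jordan's inequality: on \<open>[0, \<pi>/2]\<close> the sine lies above its chord, by concavity.\<close>
lemma jordan_inequality:
  fixes t :: real assumes "0 \<le> t" "t \<le> pi/2"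
  shows "2 / pi * t \<le> sin t"
proof -
  have convex: "convex_on {0..pi/2} (\<lambda>x. - sin x)"
    by (rule f''_ge0_imp_convex[where f'="\<lambda>x. - cos x" and f''="\<lambda>x. sin x"])
       (auto intro!: derivative_eq_intros sin_ge_zero)
  define l where "l = t / (pi/2)"
  have l: "0 \<le> l" "l \<le> 1" using assms pi_gt_zero by (auto simp: l_def field_simps)
  have "- sin ((1 - l) *\<^sub>R 0 + l *\<^sub>R (pi/2)) \<le> (1 - l) * (- sin 0) + l * (- sin (pi/2))"
    by (rule convex_onD[OF convex]) (use l in auto)
  moreover have "(1 - l) *\<^sub>R 0 + l *\<^sub>R (pi/2) = t" by (simp add: l_def)
  ultimately show ?thesis by (simp add: l_def field_simps)
qed

text \<open>Comparison with \<open>(2t/\<pi>)\<^sup>-\<^sup>g\<close>, whose integral is explicit, bounds the quarter period.\<close>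
lemma nn_integral_abs_sin_powr_quarter:
  fixes g :: real assumes g: "0 < g" "g < 1"
  shows "(\<integral>\<^sup>+t. ennreal (\<bar>sin t\<bar> powr (-g)) * indicator {0..pi/2} t \<partial>lborel)
           \<le> ennreal (pi/2/(1-g))"
proof -
  have power_integral: "(\<integral>\<^sup>+t. ennreal (t powr (-g)) * indicator {0..pi/2} t \<partial>lborel)
      = ennreal ((pi/2) powr (-g+1)/(-g+1))"
    using has_integral_powr_from_0[of "-g" "pi/2"] g
    by (intro nn_integral_has_integral_lebesgue') auto
  have "(\<integral>\<^sup>+t. ennreal (\<bar>sin t\<bar> powr (-g)) * indicator {0..pi/2} t \<partial>lborel)
      \<le> (\<integral>\<^sup>+t. ennreal ((2/pi) powr (-g)) * (ennreal (t powr (-g)) * indicator {0..pi/2} t) \<partial>lborel)"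
  proof (rule nn_integral_mono)
    fix t :: real
    show "ennreal (\<bar>sin t\<bar> powr (-g)) * indicator {0..pi/2} t
       \<le> ennreal ((2/pi) powr (-g)) * (ennreal (t powr (-g)) * indicator {0..pi/2} t)"
    proof (cases "t \<in> {0<..pi/2}")
      case True
      then have "2/pi*t \<le> sin t" "0 < 2/pi*t" using jordan_inequality by auto
      then have "\<bar>sin t\<bar> powr (-g) \<le> (2/pi*t) powr (-g)"
        by (intro powr_mono2') (use g in auto)
      also have "\<dots> = (2/pi) powr (-g) * t powr (-g)" using True by (subst powr_mult) auto
      finally show ?thesis using True by (simp add: ennreal_mult[symmetric] indicator_def)
    next
      case False
      then show ?thesis by (cases "t = 0") (auto simp: indicator_def)
    qed
  qed
  also have "\<dots> = ennreal ((2/pi) powr (-g)) * ennreal ((pi/2) powr (-g+1)/(-g+1))"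
    by (subst nn_integral_cmult) (auto simp: power_integral)
  also have "\<dots> = ennreal (pi/2/(1-g))"
  proof -
    have "(2/pi) powr (-g) * ((pi/2) powr (-g+1)/(-g+1)) = (pi/2) powr g * (pi/2) powr (-g+1) / (1-g)"
      by (simp add: powr_minus_divide powr_divide)
    also have "\<dots> = (pi/2) / (1-g)" by (simp add: powr_add[symmetric])
    finally show ?thesis using g by (subst ennreal_mult[symmetric]) auto
  qed
  finally show ?thesis .
qed

lemma nn_integral_lborel_translate:
  fixes f :: "real \<Rightarrow> ennreal" assumes [measurable]: "f \<in> borel_measurable borel"
  shows "(\<integral>\<^sup>+x. f (x + c) \<partial>lborel) = (\<integral>\<^sup>+x. f x \<partial>lborel)"
  using nn_integral_real_affine[of f 1 c] by (simp add: add.commute)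

lemma nn_integral_lborel_reflect:
  fixes f :: "real \<Rightarrow> ennreal" assumes [measurable]: "f \<in> borel_measurable borel"
  shows "(\<integral>\<^sup>+x. f (c - x) \<partial>lborel) = (\<integral>\<^sup>+x. f x \<partial>lborel)"
  using nn_integral_real_affine[of f "-1" c] by simp

text \<open>The reflection \<open>t \<mapsto> \<pi> - t\<close> maps the second quarter onto the first, so a full period
  of \<open>|sin|\<^sup>-\<^sup>g\<close> has integral at most \<open>\<pi>/(1-g)\<close>.\<close>
lemma nn_integral_abs_sin_powr_period:
  fixes g :: real assumes g: "0 < g" "g < 1"
  shows "(\<integral>\<^sup>+t. ennreal (\<bar>sin t\<bar> powr (-g)) * indicator {0..pi} t \<partial>lborel) \<le> ennreal (pi/(1-g))"
proof -
  define h where "h = (\<lambda>t. ennreal (\<bar>sin t\<bar> powr (-g)))"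
  have [measurable]: "h \<in> borel_measurable borel" unfolding h_def by measurable
  have "(\<integral>\<^sup>+t. h t * indicator {0..pi} t \<partial>lborel)
      \<le> (\<integral>\<^sup>+t. h t * indicator {0..pi/2} t + h t * indicator {pi/2..pi} t \<partial>lborel)"
    by (rule nn_integral_mono) (auto simp: indicator_def)
  also have "\<dots> = (\<integral>\<^sup>+t. h t * indicator {0..pi/2} t \<partial>lborel)
                 + (\<integral>\<^sup>+t. h t * indicator {pi/2..pi} t \<partial>lborel)"
    by (rule nn_integral_add) auto
  also have "(\<integral>\<^sup>+t. h t * indicator {pi/2..pi} t \<partial>lborel)
      = (\<integral>\<^sup>+t. h (pi - t) * indicator {pi/2..pi} (pi - t) \<partial>lborel)"
    by (rule nn_integral_lborel_reflect[symmetric]) measurable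
  also have "\<dots> = (\<integral>\<^sup>+t. h t * indicator {0..pi/2} t \<partial>lborel)"
    by (intro nn_integral_cong) (auto simp: h_def indicator_def)
  also have "(\<integral>\<^sup>+t. h t * indicator {0..pi/2} t \<partial>lborel) \<le> ennreal (pi/2/(1-g))"
    using nn_integral_abs_sin_powr_quarter[OF g] by (simp add: h_def)
  finally have "(\<integral>\<^sup>+t. h t * indicator {0..pi} t \<partial>lborel) \<le> ennreal (pi/2/(1-g)) + ennreal (pi/2/(1-g))"
    by (simp add: add_mono)
  also have "\<dots> = ennreal (pi/2/(1-g) + pi/2/(1-g))"
    using g by (subst ennreal_plus) auto
  also have "pi/2/(1-g) + pi/2/(1-g) = pi/(1-g)"
    by (metis add_divide_distrib field_sum_of_halves)
  finally show ?thesis by (simp add: h_def)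
qed

lemma nn_integral_periodic_shift:
  fixes h :: "real \<Rightarrow> ennreal" and A :: "real set"
  assumes [measurable]: "h \<in> borel_measurable borel" "A \<in> sets borel"
    and periodic: "\<And>x. h (x + c) = h x"
  shows "(\<integral>\<^sup>+x. h x * indicator A (x + c) \<partial>lborel) = (\<integral>\<^sup>+x. h x * indicator A x \<partial>lborel)"
  using nn_integral_lborel_translate[of "\<lambda>x. h x * indicator A x" c] by (simp add: periodic)

text \<open>A window \<open>[a, a+c]\<close> with \<open>-c \<le> a \<le> 0\<close> of a \<open>c\<close>-periodic function: the part left of
  \<open>0\<close> is moved by \<open>c\<close> and fills up \<open>[0, c]\<close> (up to the null set \<open>{a+c}\<close>).\<close>
lemma nn_integral_periodic_window:
  fixes h :: "real \<Rightarrow> ennreal"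
  assumes [measurable]: "h \<in> borel_measurable borel"
    and periodic: "\<And>x. h (x + c) = h x" and a: "-c \<le> a" "a \<le> 0"
  shows "(\<integral>\<^sup>+x. h x * indicator {a..a+c} x \<partial>lborel) \<le> (\<integral>\<^sup>+x. h x * indicator {0..c} x \<partial>lborel)"
proof -
  have "(\<integral>\<^sup>+x. h x * indicator {a..a+c} x \<partial>lborel)
      \<le> (\<integral>\<^sup>+x. h x * indicator {a..<0} x + h x * indicator {0..<a+c} x \<partial>lborel)"
  proof (rule nn_integral_mono_AE)
    show "AE x in lborel. h x * indicator {a..a+c} x \<le> h x * indicator {a..<0} x + h x * indicator {0..<a+c} x"
      using AE_lborel_singleton[of "a + c"] by eventually_elim (auto simp: indicator_def)
  qed
  also have "\<dots> = (\<integral>\<^sup>+x. h x * indicator {a..<0} x \<partial>lborel) + (\<integral>\<^sup>+x. h x * indicator {0..<a+c} x \<partial>lborel)"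
    by (rule nn_integral_add) auto
  also have "(\<integral>\<^sup>+x. h x * indicator {a..<0} x \<partial>lborel) = (\<integral>\<^sup>+x. h x * indicator {a+c..<c} (x + c) \<partial>lborel)"
    by (intro nn_integral_cong) (auto simp: indicator_def)
  also have "\<dots> = (\<integral>\<^sup>+x. h x * indicator {a+c..<c} x \<partial>lborel)"
    by (rule nn_integral_periodic_shift) (auto simp: periodic)
  also have "(\<integral>\<^sup>+x. h x * indicator {a+c..<c} x \<partial>lborel) + (\<integral>\<^sup>+x. h x * indicator {0..<a+c} x \<partial>lborel)
      = (\<integral>\<^sup>+x. h x * indicator {a+c..<c} x + h x * indicator {0..<a+c} x \<partial>lborel)"
    by (rule nn_integral_add[symmetric]) auto
  also have "\<dots> \<le> (\<integral>\<^sup>+x. h x * indicator {0..c} x \<partial>lborel)"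
    by (rule nn_integral_mono) (use a in \<open>auto simp: indicator_def\<close>)
  finally show ?thesis .
qed

lemma nn_integral_periodic_two_windows:
  fixes h :: "real \<Rightarrow> ennreal"
  assumes [measurable]: "h \<in> borel_measurable borel"
    and periodic: "\<And>x. h (x + c) = h x" and a: "-c \<le> a" "a \<le> 0"
  shows "(\<integral>\<^sup>+x. h x * indicator {a..a+2*c} x \<partial>lborel) \<le> 2 * (\<integral>\<^sup>+x. h x * indicator {0..c} x \<partial>lborel)"
proof -
  have second: "(\<integral>\<^sup>+x. h x * indicator {a+c..a+2*c} x \<partial>lborel)
      = (\<integral>\<^sup>+x. h x * indicator {a..a+c} x \<partial>lborel)"
  proof -
    have "(\<integral>\<^sup>+x. h x * indicator {a+c..a+2*c} x \<partial>lborel)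
        = (\<integral>\<^sup>+x. h x * indicator {a+c..a+2*c} (x + c) \<partial>lborel)"
      by (rule nn_integral_periodic_shift[symmetric]) (auto simp: periodic)
    also have "\<dots> = (\<integral>\<^sup>+x. h x * indicator {a..a+c} x \<partial>lborel)"
      by (intro nn_integral_cong) (auto simp: indicator_def)
    finally show ?thesis .
  qed
  have first: "(\<integral>\<^sup>+x. h x * indicator {a..a+c} x \<partial>lborel) \<le> (\<integral>\<^sup>+x. h x * indicator {0..c} x \<partial>lborel)"
    by (rule nn_integral_periodic_window) (use periodic a in auto)
  have "(\<integral>\<^sup>+x. h x * indicator {a..a+2*c} x \<partial>lborel)
      \<le> (\<integral>\<^sup>+x. h x * indicator {a..a+c} x + h x * indicator {a+c..a+2*c} x \<partial>lborel)"
    by (rule nn_integral_mono) (auto simp: indicator_def)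
  also have "\<dots> = (\<integral>\<^sup>+x. h x * indicator {a..a+c} x \<partial>lborel) + (\<integral>\<^sup>+x. h x * indicator {a+c..a+2*c} x \<partial>lborel)"
    by (rule nn_integral_add) auto
  also have "\<dots> \<le> (\<integral>\<^sup>+x. h x * indicator {0..c} x \<partial>lborel) + (\<integral>\<^sup>+x. h x * indicator {0..c} x \<partial>lborel)"
    unfolding second using first first by (rule add_mono)
  also have "\<dots> = 2 * (\<integral>\<^sup>+x. h x * indicator {0..c} x \<partial>lborel)"
    by (rule mult_2[symmetric])
  finally show ?thesis .
qed

lemma nn_integral_abs_sin_shift_powr:
  fixes g \<phi> :: real assumes g: "0 < g" "g < 1" and phi: "0 \<le> \<phi>" "\<phi> \<le> pi"
  shows "(\<integral>\<^sup>+t. ennreal (\<bar>sin (t - \<phi>)\<bar> powr (-g)) * indicator {0..2*pi} t \<partial>lborel)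
           \<le> ennreal (2*pi/(1-g))"
proof -
  define h where "h = (\<lambda>t. ennreal (\<bar>sin t\<bar> powr (-g)))"
  have [measurable]: "h \<in> borel_measurable borel" unfolding h_def by measurable
  have "(\<integral>\<^sup>+t. ennreal (\<bar>sin (t - \<phi>)\<bar> powr (-g)) * indicator {0..2*pi} t \<partial>lborel)
      = (\<integral>\<^sup>+t. h (t + -\<phi>) * indicator {-\<phi>..-\<phi>+2*pi} (t + -\<phi>) \<partial>lborel)"
    by (intro nn_integral_cong) (auto simp: h_def indicator_def)
  also have "\<dots> = (\<integral>\<^sup>+t. h t * indicator {-\<phi>..-\<phi>+2*pi} t \<partial>lborel)"
    by (rule nn_integral_lborel_translate) measurable
  also have "\<dots> \<le> 2 * (\<integral>\<^sup>+t. h t * indicator {0..pi} t \<partial>lborel)"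
    by (rule nn_integral_periodic_two_windows) (use phi in \<open>auto simp: h_def\<close>)
  also have "\<dots> \<le> 2 * ennreal (pi/(1-g))"
    using nn_integral_abs_sin_powr_period[OF g] by (intro mult_left_mono) (auto simp: h_def)
  also have "\<dots> = ennreal (2*pi/(1-g))"
    using ennreal_mult'[of 2 "pi/(1-g)"] by simp
  finally show ?thesis .
qed

section \<open>The contribution of a single root\<close>

lemma complex_on_line_through_origin:
  fixes a :: complex
  obtains s \<phi> :: real where "0 \<le> \<phi>" "\<phi> \<le> pi" "a = complex_of_real s * cis \<phi>"
proof -
  have polar: "a = complex_of_real (cmod a) * cis (Arg a)"
    using rcis_cmod_Arg[of a] by (simp add: rcis_def)
  have Arg: "-pi < Arg a" "Arg a \<le> pi" using Arg_bounded by auto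
  show ?thesis
  proof (cases "Arg a < 0")
    case True
    have "cis (Arg a + pi) = - cis (Arg a)" by (simp add: cis_def complex_eq_iff)
    then have "a = complex_of_real (- cmod a) * cis (Arg a + pi)" using polar by simp
    then show ?thesis using that[of "Arg a + pi" "- cmod a"] True Arg by auto
  next
    case False
    then show ?thesis using that[of "Arg a" "cmod a"] polar Arg by auto
  qed
qed

text \<open>The distance from \<open>r e\<^sup>i\<^sup>\<theta>\<close> to any point of the line \<open>\<real> e\<^sup>i\<^sup>\<phi>\<close> is at least
  \<open>r |sin (\<theta> - \<phi>)|\<close>: rotate by \<open>-\<phi>\<close> and compare with the imaginary part.\<close>
lemma dist_circle_line_ge_sin:
  fixes r s \<theta> \<phi> :: real
  assumes "r \<ge> 0"
  shows "r * \<bar>sin (\<theta> - \<phi>)\<bar> \<le> cmod (complex_of_real r * cis \<theta> - complex_of_real s * cis \<phi>)"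
proof -
  have rotate: "cis (-\<phi>) * (complex_of_real r * cis \<theta> - complex_of_real s * cis \<phi>)
      = complex_of_real r * cis (\<theta> - \<phi>) - complex_of_real s"
  proof -
    have "cis (-\<phi>) * cis \<theta> = cis (\<theta> - \<phi>)" "cis (-\<phi>) * cis \<phi> = 1" by (simp_all add: cis_mult)
    moreover have "cis (-\<phi>) * (complex_of_real r * cis \<theta> - complex_of_real s * cis \<phi>)
        = complex_of_real r * (cis (-\<phi>) * cis \<theta>) - complex_of_real s * (cis (-\<phi>) * cis \<phi>)"
      by (simp add: algebra_simps)
    ultimately show ?thesis by simp
  qed
  have "cmod (complex_of_real r * cis \<theta> - complex_of_real s * cis \<phi>)
      = cmod (complex_of_real r * cis (\<theta> - \<phi>) - complex_of_real s)"
    by (metis rotate norm_cis norm_mult mult_1)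
  moreover have "\<bar>Im (complex_of_real r * cis (\<theta> - \<phi>) - complex_of_real s)\<bar>
      \<le> cmod (complex_of_real r * cis (\<theta> - \<phi>) - complex_of_real s)"
    by (rule abs_Im_le_cmod)
  ultimately show ?thesis using assms by (simp add: abs_mult)
qed

text \<open>The pointwise bound fails only on the null set where \<open>sin (\<theta> - \<phi>) = 0\<close>.\<close>
lemma nn_integral_circle_inverse_dist_powr:
  fixes a :: complex and g r :: real
  assumes g: "0 < g" "g < 1" and r: "r > 0"
  shows "(\<integral>\<^sup>+\<theta>. ennreal (1 / cmod (complex_of_real r * cis \<theta> - a) powr g) * indicator {0..2*pi} \<theta> \<partial>lborel)
     \<le> ennreal (2*pi/((1-g) * r powr g))"
proof -
  obtain s \<phi> where phi: "0 \<le> \<phi>" "\<phi> \<le> pi" and a: "a = complex_of_real s * cis \<phi>"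
    by (rule complex_on_line_through_origin)
  have zeros_countable: "countable {\<theta>::real. sin (\<theta> - \<phi>) = 0}"
  proof (rule countable_subset)
    show "{\<theta>::real. sin (\<theta> - \<phi>) = 0} \<subseteq> range (\<lambda>i::int. of_int i * pi + \<phi>)"
      by (auto simp: sin_zero_iff_int2 algebra_simps)
  qed simp
  have sin_nonzero: "AE \<theta> in lborel. sin (\<theta> - \<phi>) \<noteq> 0"
    using AE_not_in[OF countable_imp_null_set_lborel[OF zeros_countable]] by simp
  have "(\<integral>\<^sup>+\<theta>. ennreal (1 / cmod (complex_of_real r * cis \<theta> - a) powr g) * indicator {0..2*pi} \<theta> \<partial>lborel)
     \<le> (\<integral>\<^sup>+\<theta>. ennreal (r powr (-g)) * (ennreal (\<bar>sin (\<theta> - \<phi>)\<bar> powr (-g)) * indicator {0..2*pi} \<theta>) \<partial>lborel)"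
  proof (rule nn_integral_mono_AE)
    show "AE \<theta> in lborel. ennreal (1 / cmod (complex_of_real r * cis \<theta> - a) powr g) * indicator {0..2*pi} \<theta>
       \<le> ennreal (r powr (-g)) * (ennreal (\<bar>sin (\<theta> - \<phi>)\<bar> powr (-g)) * indicator {0..2*pi} \<theta>)"
      using sin_nonzero
    proof eventually_elim
      fix \<theta> :: real assume "sin (\<theta> - \<phi>) \<noteq> 0"
      then have pos: "0 < r * \<bar>sin (\<theta> - \<phi>)\<bar>" using r by simp
      have "r * \<bar>sin (\<theta> - \<phi>)\<bar> \<le> cmod (complex_of_real r * cis \<theta> - a)"
        unfolding a by (rule dist_circle_line_ge_sin) (use r in auto)
      then have "1 / cmod (complex_of_real r * cis \<theta> - a) powr g \<le> 1 / (r * \<bar>sin (\<theta> - \<phi>)\<bar>) powr g"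
        using pos g by (intro divide_left_mono powr_mono2 mult_pos_pos) auto
      also have "\<dots> = r powr (-g) * \<bar>sin (\<theta> - \<phi>)\<bar> powr (-g)"
        using pos r by (simp add: powr_mult powr_minus_divide)
      finally show "ennreal (1 / cmod (complex_of_real r * cis \<theta> - a) powr g) * indicator {0..2*pi} \<theta>
       \<le> ennreal (r powr (-g)) * (ennreal (\<bar>sin (\<theta> - \<phi>)\<bar> powr (-g)) * indicator {0..2*pi} \<theta>)"
        by (simp add: indicator_def ennreal_mult[symmetric] ennreal_leI)
    qed
  qed
  also have "\<dots> = ennreal (r powr (-g)) * (\<integral>\<^sup>+\<theta>. ennreal (\<bar>sin (\<theta> - \<phi>)\<bar> powr (-g)) * indicator {0..2*pi} \<theta> \<partial>lborel)"
    by (rule nn_integral_cmult) measurable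
  also have "\<dots> \<le> ennreal (r powr (-g)) * ennreal (2*pi/(1-g))"
    by (intro mult_left_mono nn_integral_abs_sin_shift_powr g phi) auto
  also have "\<dots> = ennreal (2*pi/((1-g) * r powr g))"
    using g r by (subst ennreal_mult[symmetric]) (auto simp: powr_minus_divide)
  finally show ?thesis .
qed

lemma cis_borel_measurable [measurable]: "cis \<in> borel_measurable borel"
  by (intro borel_measurable_continuous_onI continuous_intros)

lemma nn_integral_circle_mean_inverse_dist_powr:
  fixes a :: "nat \<Rightarrow> complex" and g r :: real
  assumes n: "n > 0" and g: "0 < g" "g < 1" and r: "r > 0"
  shows "(\<integral>\<^sup>+\<theta>\<in>{0..2*pi}. ennreal ((\<Sum>i<n. 1 / cmod (complex_of_real r * cis \<theta> - a i) powr g) / n) \<partial>lborel)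
     \<le> ennreal (2*pi/((1-g) * r powr g))"
proof -
  define f where "f i \<theta> = ennreal (1 / cmod (complex_of_real r * cis \<theta> - a i) powr g) * indicator {0..2*pi} \<theta>"
    for i \<theta>
  have "(\<integral>\<^sup>+\<theta>\<in>{0..2*pi}. ennreal ((\<Sum>i<n. 1 / cmod (complex_of_real r * cis \<theta> - a i) powr g) / n) \<partial>lborel)
      = (\<integral>\<^sup>+\<theta>. ennreal (1 / n) * (\<Sum>i<n. f i \<theta>) \<partial>lborel)"
    by (intro nn_integral_cong)
       (simp add: f_def indicator_def sum_ennreal ennreal_mult'[symmetric] divide_inverse_commute)
  also have "\<dots> = ennreal (1 / n) * (\<integral>\<^sup>+\<theta>. (\<Sum>i<n. f i \<theta>) \<partial>lborel)"
    by (rule nn_integral_cmult) (simp add: f_def)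
  also have "(\<integral>\<^sup>+\<theta>. (\<Sum>i<n. f i \<theta>) \<partial>lborel) = (\<Sum>i<n. \<integral>\<^sup>+\<theta>. f i \<theta> \<partial>lborel)"
    by (rule nn_integral_sum) (simp add: f_def)
  also have "ennreal (1 / n) * (\<Sum>i<n. \<integral>\<^sup>+\<theta>. f i \<theta> \<partial>lborel) \<le> ennreal (1 / n) * (\<Sum>i<n. ennreal (2*pi/((1-g) * r powr g)))"
    using nn_integral_circle_inverse_dist_powr[OF g r]
    by (intro mult_left_mono sum_mono) (auto simp: f_def)
  also have "\<dots> = ennreal (2*pi/((1-g) * r powr g))"
    using n g r by (simp add: ennreal_mult[symmetric] ennreal_of_nat_eq_real_of_nat)
  finally show ?thesis .
qed

section \<open>Reduction to single roots by the AM-GM inequality\<close>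

text \<open>AM-GM applied to the numbers \<open>d\<^sub>i\<^sup>-\<^sup>g\<close>: the \<open>(-g/n)\<close>-th power of a product of \<open>n\<close>
  positive numbers is at most the mean of their \<open>(-g)\<close>-th powers.\<close>
lemma inverse_prod_powr_le_mean:
  fixes d :: "'a \<Rightarrow> real" and g :: real
  assumes "finite I" "I \<noteq> {}" and d: "\<And>i. i \<in> I \<Longrightarrow> d i > 0"
  shows "1 / (\<Prod>i\<in>I. d i) powr (g / card I) \<le> (\<Sum>i\<in>I. 1 / d i powr g) / card I"
proof -
  have "1 / (\<Prod>i\<in>I. d i) powr (g / card I) = (\<Prod>i\<in>I. 1 / d i powr g) powr (1 / card I)"
    using d by (simp add: prod_powr_distrib prod_dividef powr_divide powr_powr)
  also have "\<dots> \<le> (\<Sum>i\<in>I. (1 / d i powr g) / card I)"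
    by (rule arith_geom_mean) (use assms in auto)
  also have "\<dots> = (\<Sum>i\<in>I. 1 / d i powr g) / card I"
    by (rule sum_divide_distrib[symmetric])
  finally show ?thesis .
qed

lemma inverse_poly_powr_le_mean_roots:
  fixes p :: "complex poly" and g :: real and z :: complex and root :: "nat \<Rightarrow> complex"
  assumes deg: "degree p > 0"
    and factorization: "smult (lead_coeff p) (\<Prod>i<degree p. [:-root i, 1:]) = p"
  shows "1 / cmod (poly p z) powr (g / degree p)
     \<le> cmod (lead_coeff p) powr (- (g / degree p)) * ((\<Sum>i<degree p. 1 / cmod (z - root i) powr g) / degree p)"
    (is "_ \<le> _ * (?S / _)")
proof -
  have norm_poly: "cmod (poly p z) = cmod (lead_coeff p) * (\<Prod>i<degree p. cmod (z - root i))"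
    using arg_cong[OF factorization, of "\<lambda>p. cmod (poly p z)"]
    by (simp add: poly_prod norm_mult prod_norm)
  show ?thesis
  proof (cases "poly p z = 0")
    case True
    then show ?thesis by (simp add: sum_nonneg)
  next
    case False
    then have "cmod (lead_coeff p) * (\<Prod>i<degree p. cmod (z - root i)) \<noteq> 0"
      by (subst norm_poly[symmetric]) simp
    then have lead: "cmod (lead_coeff p) > 0" and prod: "(\<Prod>i<degree p. cmod (z - root i)) \<noteq> 0"
      by auto
    have dist: "cmod (z - root i) > 0" if "i < degree p" for i
      using prod that by (auto simp: prod_zero_iff)
    have "1 / cmod (poly p z) powr (g / degree p)
        = cmod (lead_coeff p) powr (- (g / degree p)) * (1 / (\<Prod>i<degree p. cmod (z - root i)) powr (g / degree p))"
      using lead by (simp add: norm_poly powr_mult powr_minus_divide)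
    also have "\<dots> \<le> cmod (lead_coeff p) powr (- (g / degree p)) * (?S / degree p)"
      using inverse_prod_powr_le_mean[of "{..<degree p}" "\<lambda>i. cmod (z - root i)" g] deg dist
      by (intro mult_left_mono) auto
    finally show ?thesis by simp
  qed
qed

theorem lemma5:
  fixes p :: "complex poly" and \<gamma> r :: real
  assumes "degree p > 0" and "0 < \<gamma>" and "\<gamma> < 1" and "r > 0"
  shows "(\<integral>\<^sup>+ \<theta>\<in>{0..2*pi}.
            ennreal (1 / (cmod (poly p (complex_of_real r * cis \<theta>)) powr (\<gamma> / real (degree p)))) \<partial>lborel)
         \<le> ennreal (2 * pi / ((1 - \<gamma>) * cmod (lead_coeff p) powr (\<gamma> / real (degree p))) * (1 / r powr \<gamma>))"
proof -
  obtain root where factorization: "smult (lead_coeff p) (\<Prod>i<degree p. [:-root i, 1:]) = p"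
    by (rule complex_poly_decompose')
  define n where "n = degree p"
  define C where "C = cmod (lead_coeff p) powr (- (\<gamma> / n))"
  define mean where "mean \<theta> = (\<Sum>i<n. 1 / cmod (complex_of_real r * cis \<theta> - root i) powr \<gamma>) / n" for \<theta>
  have "(\<integral>\<^sup>+ \<theta>\<in>{0..2*pi}. ennreal (1 / (cmod (poly p (complex_of_real r * cis \<theta>)) powr (\<gamma> / n))) \<partial>lborel)
     \<le> (\<integral>\<^sup>+ \<theta>\<in>{0..2*pi}. ennreal C * ennreal (mean \<theta>) \<partial>lborel)"
    using inverse_poly_powr_le_mean_roots[OF assms(1) factorization]
    by (intro nn_integral_mono) (simp add: C_def mean_def n_def indicator_def ennreal_mult'[symmetric] ennreal_leI)
  also have "\<dots> = ennreal C * (\<integral>\<^sup>+ \<theta>\<in>{0..2*pi}. ennreal (mean \<theta>) \<partial>lborel)"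
    by (simp add: mult.assoc nn_integral_cmult mean_def)
  also have "\<dots> \<le> ennreal C * ennreal (2*pi/((1-\<gamma>) * r powr \<gamma>))"
    using nn_integral_circle_mean_inverse_dist_powr[of n \<gamma> r root] assms
    by (intro mult_left_mono) (auto simp: mean_def n_def)
  also have "\<dots> = ennreal (C * (2*pi/((1-\<gamma>) * r powr \<gamma>)))"
    using assms(3) by (intro ennreal_mult[symmetric]) (auto simp: C_def)
  also have "C * (2*pi/((1-\<gamma>) * r powr \<gamma>))
      = 2 * pi / ((1 - \<gamma>) * cmod (lead_coeff p) powr (\<gamma> / n)) * (1 / r powr \<gamma>)"
    by (simp add: C_def powr_minus_divide)
  finally show ?thesis by (simp add: n_def)
qed

end
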